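(* Let $B_J\in\mathbb R^{n\times n}$ and let $P_1,\dots,P_d$ ($1\le d\le n$) be nonzero $n\times n$ matrices with entries in $\{0,1\}$ such that $\sum_{p=1}^dP_p=I$ (a decomposition of the identity; hence each $P_p$ is a diagonal $0/1$ matrix and they have disjoint supports), and assume $P_pB_J\ne O$ for all $p$. Let $\mathcal P=\prod_{p=d}^{1}(P_pB_J+I-P_p)=(P_dB_J+I-P_d)\cdots(P_1B_J+I-P_1)$. Then $\mathcal P$ and the iteration matrix $T(\mathcal B)$ of the splitting $\mathcal B=(P_1B_J,\dots,P_dB_J)$ of $B_J$ have the same nonzero eigenvalues.
   Context: For $B\in\mathbb R^{n\times n}$, a splitting of $B$ of order $d\ge1$ is an ordered $d$-tuple $\mathcal B=(B_1,\dots,B_d)$ of real $n\times n$ matrices with $B_p\neq O$ for all $p$, $\sum_{p=1}^d B_p=B$, and $B_p\circ B_q=O$ (Hadamard product) for $p\ne q$. The iteration matrix of $\mathcal B$ is the $dn\times dn$ matrix $T(\mathcal B)=(I_{dn}-\mathcal L)^{-1}\mathcal U$, where $\mathcal L,\mathcal U$ are $d\times d$ block matrices with $n\times n$ blocks, $\mathcal L_{ij}=B_j$ if $i>j$ and $O$ otherwise, $\mathcal U_{ij}=B_j$ if $i\le j$ and $O$ otherwise. *)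

theory Defs
  imports "Jordan_Normal_Form.Matrix" "Jordan_Normal_Form.Char_Poly"
    "Jordan_Normal_Form.Gauss_Jordan_Elimination"
begin

text \<open>Matrices are JNF matrices of type real mat with explicit dimensions.
A d-tuple of n x n matrices is a function Bs :: nat => real mat, where
Bs p (p < d) is the (p+1)-th component B_(p+1).\<close>

definition is_splitting :: "nat \<Rightarrow> nat \<Rightarrow> real mat \<Rightarrow> (nat \<Rightarrow> real mat) \<Rightarrow> bool" where
  "is_splitting n d B Bs \<longleftrightarrow> d \<ge> 1 \<and> B \<in> carrier_mat n n \<and>
     (\<forall>p<d. Bs p \<in> carrier_mat n n \<and> Bs p \<noteq> 0\<^sub>m n n) \<and>
     (\<forall>i<n. \<forall>j<n. (\<Sum>p<d. Bs p $$ (i,j)) = B $$ (i,j)) \<and>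
     (\<forall>p<d. \<forall>q<d. p \<noteq> q \<longrightarrow> (\<forall>i<n. \<forall>j<n. Bs p $$ (i,j) * Bs q $$ (i,j) = 0))"

text \<open>Block matrices L and U (d x d blocks of size n x n); block (bi,bj) is at
rows bi*n.., cols bj*n.. (0-based block indices).\<close>
definition blockL :: "nat \<Rightarrow> nat \<Rightarrow> (nat \<Rightarrow> real mat) \<Rightarrow> real mat" where
  "blockL n d Bs = mat (d*n) (d*n) (\<lambda>(i,j).
     if i div n > j div n then Bs (j div n) $$ (i mod n, j mod n) else 0)"

definition blockU :: "nat \<Rightarrow> nat \<Rightarrow> (nat \<Rightarrow> real mat) \<Rightarrow> real mat" where
  "blockU n d Bs = mat (d*n) (d*n) (\<lambda>(i,j).
     if i div n \<le> j div n then Bs (j div n) $$ (i mod n, j mod n) else 0)"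

text \<open>Iteration matrix T = (I - L)^{-1} U.  I - L is unit lower triangular, hence invertible.\<close>
definition iteration_mat :: "nat \<Rightarrow> nat \<Rightarrow> (nat \<Rightarrow> real mat) \<Rightarrow> real mat" where
  "iteration_mat n d Bs =
     the (mat_inverse (1\<^sub>m (d*n) - blockL n d Bs)) * blockU n d Bs"

text \<open>prod_factors n P B k = (P_(k-1) B + I - P_(k-1)) * ... * (P_0 B + I - P_0), 0-based.\<close>
fun prod_factors :: "nat \<Rightarrow> (nat \<Rightarrow> real mat) \<Rightarrow> real mat \<Rightarrow> nat \<Rightarrow> real mat" where
  "prod_factors n P B 0 = 1\<^sub>m n"
| "prod_factors n P B (Suc k) = (P k * B + 1\<^sub>m n - P k) * prod_factors n P B k"

definition nonzero_eigenvalues :: "real mat \<Rightarrow> complex set" where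
  "nonzero_eigenvalues A = {z. z \<noteq> 0 \<and> eigenvalue (map_mat complex_of_real A) z}"

end

theory Submission
  imports Defs
begin

text \<open>Let \<open>G\<^sub>k\<close> be the product of the first \<open>k\<close> factors of \<open>\<P>\<close>, so \<open>G\<^sub>0 = I\<close> and \<open>G\<^sub>d = \<P>\<close>.
Since the \<open>P\<^sub>p\<close> are complementary diagonal projections, the rows selected by \<open>P\<^sub>p\<close> are changed
only by the \<open>p\<close>-th factor: \<open>P\<^sub>p G\<^sub>k = P\<^sub>p B\<^sub>J G\<^sub>p\<^sub>-\<^sub>1\<close> for \<open>k \<ge> p\<close> and \<open>P\<^sub>p G\<^sub>k = P\<^sub>p\<close> for \<open>k < p\<close>.
With the block column \<open>Z = (G\<^sub>0; \<dots>; G\<^sub>d\<^sub>-\<^sub>1)\<close> and the block row \<open>Y = (P\<^sub>1B\<^sub>J, \<dots>, P\<^sub>dB\<^sub>J)\<close> this gives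
\<open>(I - \<L>) Z = X\<close>, where the \<open>a\<close>-th block of \<open>X\<close> is \<open>P\<^sub>a + \<dots> + P\<^sub>d\<close>, and \<open>\<U> = X Y\<close>. Hence
\<open>T(\<B>) = (I - \<L>)\<^sup>-\<^sup>1 \<U> = Z Y\<close>, while \<open>Y Z = \<Sum>\<^sub>p P\<^sub>p B\<^sub>J G\<^sub>p\<^sub>-\<^sub>1 = \<Sum>\<^sub>p P\<^sub>p G\<^sub>d = \<P>\<close>; and \<open>ZY\<close>, \<open>YZ\<close>
have the same nonzero eigenvalues.\<close>

lemma eigenvalue_mult_swap:
  fixes A B :: "'a :: field mat"
  assumes A: "A \<in> carrier_mat m k" and B: "B \<in> carrier_mat k m"
    and z: "z \<noteq> 0" and ev: "eigenvalue (A * B) z"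
  shows "eigenvalue (B * A) z"
proof -
  from ev obtain v where v: "v \<in> carrier_vec m" "v \<noteq> 0\<^sub>v m" and ABv: "(A * B) *\<^sub>v v = z \<cdot>\<^sub>v v"
    using A B unfolding eigenvalue_def eigenvector_def by auto
  define w where "w = B *\<^sub>v v"
  have w: "w \<in> carrier_vec k" using B v unfolding w_def by auto
  have Aw: "A *\<^sub>v w = z \<cdot>\<^sub>v v" using A B v ABv unfolding w_def by (metis assoc_mult_mat_vec)
  have "w \<noteq> 0\<^sub>v k"
  proof
    assume w0: "w = 0\<^sub>v k"
    have "v $ i = 0" if i: "i < m" for i
    proof -
      have "z * v $ i = (A *\<^sub>v w) $ i" using Aw i v(1) by simp
      also have "\<dots> = 0" using A i w0 by simp
      finally show ?thesis using z by simp
    qed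
    then have "v = 0\<^sub>v m" using v(1) by (intro eq_vecI) auto
    with v(2) show False ..
  qed
  moreover have "(B * A) *\<^sub>v w = z \<cdot>\<^sub>v w"
    using A B w v Aw unfolding w_def by (metis assoc_mult_mat_vec mult_mat_vec)
  ultimately show ?thesis using w B unfolding eigenvalue_def eigenvector_def by auto
qed

lemma nonzero_eigenvalues_mult_swap:
  assumes A: "A \<in> carrier_mat m k" and B: "B \<in> carrier_mat k m"
  shows "nonzero_eigenvalues (A * B) = nonzero_eigenvalues (B * A)"
proof -
  let ?c = "map_mat complex_of_real"
  have "?c A \<in> carrier_mat m k" "?c B \<in> carrier_mat k m" using A B by auto
  then show ?thesis
    unfolding nonzero_eigenvalues_def of_real_hom.mat_hom_mult[OF A B] of_real_hom.mat_hom_mult[OF B A]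
    using eigenvalue_mult_swap by blast
qed

lemma index_mult_mat_lessThan:
  assumes "A \<in> carrier_mat r k" "B \<in> carrier_mat k c" "i < r" "j < c"
  shows "(A * B) $$ (i, j) = (\<Sum>m<k. A $$ (i, m) * B $$ (m, j))"
  using assms by (auto simp: scalar_prod_def lessThan_atLeast0 intro!: sum.cong)

lemma sum_lessThan_mult_blocks:
  fixes f :: "nat \<Rightarrow> 'a :: comm_monoid_add"
  shows "(\<Sum>t<d * n. f t) = (\<Sum>b<d. \<Sum>m<n. f (b * n + m))"
proof -
  have "sum f {b * n..<b * n + n} = (\<Sum>m<n. f (b * n + m))" for b
    using sum.shift_bounds_nat_ivl[of f 0 "b * n" n] by (simp add: add.commute lessThan_atLeast0)
  then show ?thesis by (simp add: sum.nat_group[symmetric])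
qed

definition block_col :: "nat \<Rightarrow> nat \<Rightarrow> nat \<Rightarrow> (nat \<Rightarrow> 'a mat) \<Rightarrow> 'a mat" where
  "block_col n d c Ms = mat (d * n) c (\<lambda>(i, l). Ms (i div n) $$ (i mod n, l))"

definition block_row :: "nat \<Rightarrow> nat \<Rightarrow> nat \<Rightarrow> (nat \<Rightarrow> 'a mat) \<Rightarrow> 'a mat" where
  "block_row r n d Ms = mat r (d * n) (\<lambda>(i, j). Ms (j div n) $$ (i, j mod n))"

lemma dim_block_col [simp]: "dim_row (block_col n d c Ms) = d * n" "dim_col (block_col n d c Ms) = c"
  by (simp_all add: block_col_def)

lemma dim_block_row [simp]: "dim_row (block_row r n d Ms) = r" "dim_col (block_row r n d Ms) = d * n"
  by (simp_all add: block_row_def)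

lemma block_col_carrier [simp]: "block_col n d c Ms \<in> carrier_mat (d * n) c"
  by (simp add: carrier_matI)

lemma block_row_carrier [simp]: "block_row r n d Ms \<in> carrier_mat r (d * n)"
  by (simp add: carrier_matI)

lemma dim_blockL [simp]: "dim_row (blockL n d Bs) = d * n" "dim_col (blockL n d Bs) = d * n"
  by (simp_all add: blockL_def)

lemma dim_blockU [simp]: "dim_row (blockU n d Bs) = d * n" "dim_col (blockU n d Bs) = d * n"
  by (simp_all add: blockU_def)

lemma blockL_carrier [simp]: "blockL n d Bs \<in> carrier_mat (d * n) (d * n)"
  by (simp add: carrier_matI)

lemma block_index_less:
  assumes "b < d" "m < (n :: nat)"
  shows "b * n + m < d * n"
proof -
  have "b * n + m < Suc b * n" using assms by simp
  also have "\<dots> \<le> d * n" using assms by (intro mult_right_mono) auto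
  finally show ?thesis .
qed

lemma block_index_bounds:
  assumes "i < d * (n :: nat)"
  shows "i div n < d" "i mod n < n"
proof -
  have "0 < n" using assms by (cases n) auto
  then show "i div n < d" "i mod n < n" using assms by (simp_all add: less_mult_imp_div_less)
qed

lemma index_mult_block_col:
  fixes A :: "'a :: comm_semiring_0 mat"
  assumes "A \<in> carrier_mat r (d * n)" "i < r" "l < c"
  shows "(A * block_col n d c Ns) $$ (i, l) = (\<Sum>b<d. \<Sum>m<n. A $$ (i, b * n + m) * Ns b $$ (m, l))"
proof -
  have "(A * block_col n d c Ns) $$ (i, l) = (\<Sum>t<d * n. A $$ (i, t) * block_col n d c Ns $$ (t, l))"
    using assms by (intro index_mult_mat_lessThan) auto
  also have "\<dots> = (\<Sum>b<d. \<Sum>m<n. A $$ (i, b * n + m) * Ns b $$ (m, l))"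
    unfolding sum_lessThan_mult_blocks using assms
    by (intro sum.cong refl) (simp add: block_col_def block_index_less)
  finally show ?thesis .
qed

lemma index_block_row_mult_block_col:
  fixes Ms Ns :: "nat \<Rightarrow> 'a :: comm_semiring_0 mat"
  assumes "\<And>b. b < d \<Longrightarrow> Ms b \<in> carrier_mat r n" "\<And>b. b < d \<Longrightarrow> Ns b \<in> carrier_mat n c"
    and "i < r" "l < c"
  shows "(block_row r n d Ms * block_col n d c Ns) $$ (i, l) = (\<Sum>b<d. (Ms b * Ns b) $$ (i, l))"
proof -
  have "(Ms b * Ns b) $$ (i, l) = (\<Sum>m<n. Ms b $$ (i, m) * Ns b $$ (m, l))" if "b < d" for b
    using assms that by (intro index_mult_mat_lessThan) auto
  then show ?thesis unfolding index_mult_block_col[OF block_row_carrier assms(3,4)] using assms(3)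
    by (intro sum.cong refl) (simp add: block_row_def block_index_less)
qed

lemma index_blockL_mult_block_col:
  assumes "\<And>b. b < d \<Longrightarrow> Bs b \<in> carrier_mat n n" "\<And>b. b < d \<Longrightarrow> Ns b \<in> carrier_mat n c"
    and i: "i < d * n" and "l < c"
  shows "(blockL n d Bs * block_col n d c Ns) $$ (i, l) = (\<Sum>b < i div n. (Bs b * Ns b) $$ (i mod n, l))"
proof -
  have a: "i div n < d" and r: "i mod n < n" using block_index_bounds[OF i] .
  have "(Bs b * Ns b) $$ (i mod n, l) = (\<Sum>m<n. Bs b $$ (i mod n, m) * Ns b $$ (m, l))"
    if "b < d" for b using assms r that by (intro index_mult_mat_lessThan) auto
  then have "(blockL n d Bs * block_col n d c Ns) $$ (i, l)
      = (\<Sum>b<d. if b < i div n then (Bs b * Ns b) $$ (i mod n, l) else 0)"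
    unfolding index_mult_block_col[OF blockL_carrier assms(3,4)] using i
    by (intro sum.cong refl) (simp add: blockL_def block_index_less)
  also have "\<dots> = (\<Sum>b < i div n. (Bs b * Ns b) $$ (i mod n, l))"
    using a by (simp add: sum.If_cases lessThan_def Int_def, intro sum.cong) auto
  finally show ?thesis .
qed

lemma index_block_col_mult_block_row:
  fixes Xs Ys :: "nat \<Rightarrow> 'a :: comm_semiring_0 mat"
  assumes "\<And>b. b < d \<Longrightarrow> Xs b \<in> carrier_mat n k" "\<And>b. b < d \<Longrightarrow> Ys b \<in> carrier_mat k n"
    and i: "i < d * n" and j: "j < d * n"
  shows "(block_col n d k Xs * block_row k n d Ys) $$ (i, j)
    = (Xs (i div n) * Ys (j div n)) $$ (i mod n, j mod n)"
proof -
  note bounds = block_index_bounds[OF i] block_index_bounds[OF j]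
  have "(block_col n d k Xs * block_row k n d Ys) $$ (i, j)
      = (\<Sum>m<k. block_col n d k Xs $$ (i, m) * block_row k n d Ys $$ (m, j))"
    using i j by (intro index_mult_mat_lessThan) auto
  also have "\<dots> = (\<Sum>m<k. Xs (i div n) $$ (i mod n, m) * Ys (j div n) $$ (m, j mod n))"
    using i j by (simp add: block_col_def block_row_def)
  also have "\<dots> = (Xs (i div n) * Ys (j div n)) $$ (i mod n, j mod n)"
    using assms(1)[of "i div n"] assms(2)[of "j div n"] bounds
    by (intro index_mult_mat_lessThan[symmetric]) auto
  finally show ?thesis .
qed

lemma det_one_minus_blockL: "det (1\<^sub>m (d * n) - blockL n d Bs) = 1"
proof -
  let ?A = "1\<^sub>m (d * n) - blockL n d Bs"
  have "det ?A = prod_list (diag_mat ?A)"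
  proof (rule det_lower_triangular)
    fix i j assume ij: "i < j" "j < d * n"
    then have "i div n \<le> j div n" by (simp add: div_le_mono)
    with ij show "?A $$ (i, j) = 0" by (simp add: blockL_def)
  qed (rule minus_carrier_mat, simp)
  also have "\<dots> = 1" by (simp add: prod_list_diag_prod blockL_def)
  finally show ?thesis .
qed

lemma the_mat_inverse:
  fixes A :: "'a :: field mat"
  assumes A: "A \<in> carrier_mat N N" and "det A \<noteq> 0"
  shows "the (mat_inverse A) \<in> carrier_mat N N" "the (mat_inverse A) * A = 1\<^sub>m N"
proof -
  have "A \<in> Units (ring_mat TYPE('a) N ())" using assms by (intro det_non_zero_imp_unit)
  then obtain S where "mat_inverse A = Some S" using mat_inverse(1)[OF A] by fastforce
  then show "the (mat_inverse A) \<in> carrier_mat N N" "the (mat_inverse A) * A = 1\<^sub>m N"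
    using mat_inverse(2)[OF A] by auto
qed

locale identity_partition =
  fixes n d :: nat and P :: "nat \<Rightarrow> real mat"
  assumes carrier: "\<And>p. p < d \<Longrightarrow> P p \<in> carrier_mat n n"
    and zero_one: "\<And>p i j. p < d \<Longrightarrow> i < n \<Longrightarrow> j < n \<Longrightarrow> P p $$ (i, j) \<in> {0, 1}"
    and sum_eq_one: "\<And>i j. i < n \<Longrightarrow> j < n \<Longrightarrow> (\<Sum>p<d. P p $$ (i, j)) = 1\<^sub>m n $$ (i, j)"
begin

lemma offdiag_eq_0:
  assumes "p < d" "i < n" "j < n" "i \<noteq> j"
  shows "P p $$ (i, j) = 0"
proof -
  have "(\<Sum>q<d. P q $$ (i, j)) = 0" "\<forall>q<d. P q $$ (i, j) \<ge> 0"
    using assms sum_eq_one zero_one by force+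
  then show ?thesis using assms sum_nonneg_eq_0_iff[of "{..<d}" "\<lambda>q. P q $$ (i, j)"] by auto
qed

lemma sum_diag: "i < n \<Longrightarrow> (\<Sum>p<d. P p $$ (i, i)) = 1"
  using sum_eq_one by simp

lemma diag_mult_diag:
  assumes p: "p < d" and q: "q < d" and i: "i < n"
  shows "P p $$ (i, i) * P q $$ (i, i) = (if p = q then P p $$ (i, i) else 0)"
proof (cases "p = q")
  case True
  then show ?thesis using zero_one[OF p i i] by auto
next
  case False
  have "(\<Sum>r\<in>{p, q}. P r $$ (i, i)) \<le> (\<Sum>r<d. P r $$ (i, i))"
    using p q i zero_one by (intro sum_mono2) force+
  then have "P p $$ (i, i) + P q $$ (i, i) \<le> 1" using False sum_diag[OF i] by simp
  then show ?thesis using False zero_one[OF p i i] zero_one[OF q i i] by auto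
qed

lemma index_mult_left:
  assumes p: "p < d" and M: "M \<in> carrier_mat n c" and i: "i < n" and l: "l < c"
  shows "(P p * M) $$ (i, l) = P p $$ (i, i) * M $$ (i, l)"
proof -
  have "(P p * M) $$ (i, l) = (\<Sum>m<n. P p $$ (i, m) * M $$ (m, l))"
    using assms carrier by (intro index_mult_mat_lessThan) auto
  also have "\<dots> = (\<Sum>m<n. if m = i then P p $$ (i, i) * M $$ (i, l) else 0)"
    using p i offdiag_eq_0 by (intro sum.cong) auto
  finally show ?thesis using i by simp
qed

text \<open>\<open>tail_sum a\<close> is the diagonal matrix \<open>P a + \<dots> + P (d - 1)\<close>.\<close>

definition tail_sum :: "nat \<Rightarrow> real mat" where
  "tail_sum a = mat n n (\<lambda>(i, l). if i = l then (\<Sum>p\<in>{a..<d}. P p $$ (i, i)) else 0)"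

lemma tail_sum_carrier [simp]: "tail_sum a \<in> carrier_mat n n"
  by (simp add: tail_sum_def)

lemma index_tail_sum_mult:
  assumes c: "c < d" and M: "M \<in> carrier_mat n k" and r: "r < n" and s: "s < k"
  shows "(tail_sum a * (P c * M)) $$ (r, s) = (if a \<le> c then (P c * M) $$ (r, s) else 0)"
proof -
  have PM: "P c * M \<in> carrier_mat n k" using carrier[OF c] M by auto
  have "(tail_sum a * (P c * M)) $$ (r, s) = (\<Sum>m<n. tail_sum a $$ (r, m) * (P c * M) $$ (m, s))"
    using PM r s by (intro index_mult_mat_lessThan) auto
  also have "\<dots> = (\<Sum>p\<in>{a..<d}. P p $$ (r, r) * P c $$ (r, r)) * M $$ (r, s)"
    using r index_mult_left[OF c M r s]
    by (simp add: tail_sum_def if_distrib[of "\<lambda>x. x * _"] sum_distrib_right mult.assoc cong: if_cong)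
  also have "(\<Sum>p\<in>{a..<d}. P p $$ (r, r) * P c $$ (r, r)) = (if a \<le> c then P c $$ (r, r) else 0)"
    using c r by (simp add: diag_mult_diag)
  finally show ?thesis using index_mult_left[OF c M r s] by simp
qed

lemma index_mult_mult_left:
  assumes p: "p < d" and "M \<in> carrier_mat n k" "N \<in> carrier_mat k c" and "i < n" "l < c"
  shows "(P p * M * N) $$ (i, l) = P p $$ (i, i) * (M * N) $$ (i, l)"
proof -
  have "P p * M * N = P p * (M * N)" using assms carrier[OF p] by (intro assoc_mult_mat) auto
  moreover have "M * N \<in> carrier_mat n c" using assms by auto
  ultimately show ?thesis using assms by (simp only: index_mult_left)
qed

end

locale identity_partition_splitting = identity_partition +
  fixes B :: "real mat"
  assumes B_carrier: "B \<in> carrier_mat n n"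
begin

abbreviation G :: "nat \<Rightarrow> real mat" where
  "G \<equiv> prod_factors n P B"

lemma splitting_component_carrier [simp]: "p < d \<Longrightarrow> P p * B \<in> carrier_mat n n"
  using carrier[of p] B_carrier by auto

lemma prod_factors_carrier: "k \<le> d \<Longrightarrow> G k \<in> carrier_mat n n"
proof (induction k)
  case (Suc k)
  then show ?case using carrier[of k] B_carrier by auto
qed simp

lemma index_prod_factors_Suc:
  assumes k: "k < d" and i: "i < n" and l: "l < n"
  shows "G (Suc k) $$ (i, l) = P k $$ (i, i) * (B * G k) $$ (i, l) + (1 - P k $$ (i, i)) * G k $$ (i, l)"
proof -
  have Gk: "G k \<in> carrier_mat n n" using k prod_factors_carrier by simp
  have "G (Suc k) $$ (i, l) = (\<Sum>m<n. (P k * B + 1\<^sub>m n - P k) $$ (i, m) * G k $$ (m, l))"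
    unfolding prod_factors.simps using carrier[OF k] B_carrier Gk i l
    by (intro index_mult_mat_lessThan) auto
  also have "\<dots> = (\<Sum>m<n. P k $$ (i, i) * (B $$ (i, m) * G k $$ (m, l))
      + (if m = i then (1 - P k $$ (i, i)) * G k $$ (i, l) else 0))"
    using carrier[OF k] B_carrier i offdiag_eq_0[OF k i] index_mult_left[OF k B_carrier i]
    by (intro sum.cong) (auto simp: algebra_simps)
  also have "\<dots> = P k $$ (i, i) * (B * G k) $$ (i, l) + (1 - P k $$ (i, i)) * G k $$ (i, l)"
    unfolding index_mult_mat_lessThan[OF B_carrier Gk i l] using i by (simp add: sum.distrib sum_distrib_left)
  finally show ?thesis .
qed

lemma diag_mult_prod_factors:
  assumes j: "j < d" and k: "k \<le> d" and i: "i < n" and l: "l < n"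
  shows "P j $$ (i, i) * G k $$ (i, l)
    = (if j < k then P j $$ (i, i) * (B * G j) $$ (i, l) else P j $$ (i, i) * 1\<^sub>m n $$ (i, l))"
  using k
proof (induction k)
  case (Suc k)
  then have "k < d" by simp
  have "P j $$ (i, i) * G (Suc k) $$ (i, l)
      = P j $$ (i, i) * P k $$ (i, i) * (B * G k) $$ (i, l)
        + (P j $$ (i, i) - P j $$ (i, i) * P k $$ (i, i)) * G k $$ (i, l)"
    unfolding index_prod_factors_Suc[OF \<open>k < d\<close> i l] by (simp add: algebra_simps)
  also have "\<dots> = (if j = k then P j $$ (i, i) * (B * G k) $$ (i, l) else P j $$ (i, i) * G k $$ (i, l))"
    using diag_mult_diag[OF j \<open>k < d\<close> i] by auto
  finally show ?case using Suc by auto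
qed simp

lemma index_prod_factors:
  assumes a: "a \<le> d" and r: "r < n" and l: "l < n"
  shows "G a $$ (r, l) = tail_sum a $$ (r, l) + (\<Sum>b<a. P b $$ (r, r) * (B * G b) $$ (r, l))"
proof -
  have "G a $$ (r, l) = (\<Sum>p<d. P p $$ (r, r) * G a $$ (r, l))"
    using sum_diag[OF r] by (simp add: sum_distrib_right[symmetric])
  also have "\<dots> = (\<Sum>p<a. P p $$ (r, r) * G a $$ (r, l)) + (\<Sum>p\<in>{a..<d}. P p $$ (r, r) * G a $$ (r, l))"
    using a by (simp add: lessThan_atLeast0 sum.atLeastLessThan_concat)
  also have "(\<Sum>p<a. P p $$ (r, r) * G a $$ (r, l)) = (\<Sum>b<a. P b $$ (r, r) * (B * G b) $$ (r, l))"
    using a r l by (intro sum.cong) (auto simp: diag_mult_prod_factors)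
  also have "(\<Sum>p\<in>{a..<d}. P p $$ (r, r) * G a $$ (r, l)) = tail_sum a $$ (r, l)"
    using a r l by (simp add: diag_mult_prod_factors tail_sum_def sum_distrib_right[symmetric])
  finally show ?thesis by simp
qed

lemma blockU_eq_block_col_mult_block_row:
  "blockU n d (\<lambda>p. P p * B) = block_col n d n tail_sum * block_row n n d (\<lambda>p. P p * B)"
proof (rule eq_matI)
  fix i j assume "i < dim_row (block_col n d n tail_sum * block_row n n d (\<lambda>p. P p * B))"
    and "j < dim_col (block_col n d n tail_sum * block_row n n d (\<lambda>p. P p * B))"
  then have i: "i < d * n" and j: "j < d * n" by auto
  note bounds = block_index_bounds[OF i] block_index_bounds[OF j]
  have "(block_col n d n tail_sum * block_row n n d (\<lambda>p. P p * B)) $$ (i, j)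
      = (tail_sum (i div n) * (P (j div n) * B)) $$ (i mod n, j mod n)"
    using i j carrier B_carrier by (intro index_block_col_mult_block_row) auto
  also have "\<dots> = blockU n d (\<lambda>p. P p * B) $$ (i, j)"
    using i j bounds B_carrier by (simp add: index_tail_sum_mult blockU_def)
  finally show "blockU n d (\<lambda>p. P p * B) $$ (i, j)
      = (block_col n d n tail_sum * block_row n n d (\<lambda>p. P p * B)) $$ (i, j)" ..
qed auto

lemma one_minus_blockL_mult_block_col:
  "(1\<^sub>m (d * n) - blockL n d (\<lambda>p. P p * B)) * block_col n d n G = block_col n d n tail_sum"
proof -
  let ?L = "blockL n d (\<lambda>p. P p * B)" and ?Z = "block_col n d n G"
  have "(1\<^sub>m (d * n) - ?L) * ?Z = ?Z - ?L * ?Z"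
    by (subst minus_mult_distrib_mat[of _ "d * n" "d * n" _ _ n]) auto
  also have "\<dots> = block_col n d n tail_sum"
  proof (rule eq_matI)
    fix i l assume "i < dim_row (block_col n d n tail_sum)" "l < dim_col (block_col n d n tail_sum)"
    then have i: "i < d * n" and l: "l < n" by auto
    note bounds = block_index_bounds[OF i]
    have "(?L * ?Z) $$ (i, l) = (\<Sum>b < i div n. (P b * B * G b) $$ (i mod n, l))"
      using i l carrier B_carrier prod_factors_carrier by (intro index_blockL_mult_block_col) auto
    also have "\<dots> = (\<Sum>b < i div n. P b $$ (i mod n, i mod n) * (B * G b) $$ (i mod n, l))"
      using l bounds B_carrier prod_factors_carrier by (intro sum.cong refl index_mult_mult_left) auto
    finally have LZ: "(?L * ?Z) $$ (i, l) = \<dots>" .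
    have "(?Z - ?L * ?Z) $$ (i, l) = ?Z $$ (i, l) - (?L * ?Z) $$ (i, l)"
      using i l by (intro index_minus_mat) auto
    also have "?Z $$ (i, l) = G (i div n) $$ (i mod n, l)" using i l by (simp add: block_col_def)
    also note LZ
    also have "G (i div n) $$ (i mod n, l)
        - (\<Sum>b < i div n. P b $$ (i mod n, i mod n) * (B * G b) $$ (i mod n, l))
        = tail_sum (i div n) $$ (i mod n, l)"
      using bounds l by (simp add: index_prod_factors)
    also have "\<dots> = block_col n d n tail_sum $$ (i, l)" using i l by (simp add: block_col_def)
    finally show "(?Z - ?L * ?Z) $$ (i, l) = block_col n d n tail_sum $$ (i, l)" .
  qed auto
  finally show ?thesis .
qed

lemma block_row_mult_block_col:
  "block_row n n d (\<lambda>p. P p * B) * block_col n d n G = G d"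
proof (rule eq_matI)
  fix i l assume "i < dim_row (G d)" "l < dim_col (G d)"
  then have i: "i < n" and l: "l < n" using prod_factors_carrier[of d] by auto
  have "(block_row n n d (\<lambda>p. P p * B) * block_col n d n G) $$ (i, l)
      = (\<Sum>b<d. (P b * B * G b) $$ (i, l))"
    using i l carrier B_carrier prod_factors_carrier by (intro index_block_row_mult_block_col) auto
  also have "\<dots> = (\<Sum>b<d. P b $$ (i, i) * (B * G b) $$ (i, l))"
    using i l B_carrier prod_factors_carrier by (intro sum.cong refl index_mult_mult_left) auto
  also have "\<dots> = (\<Sum>b<d. P b $$ (i, i) * G d $$ (i, l))"
    using i l by (intro sum.cong) (auto simp: diag_mult_prod_factors)
  also have "\<dots> = G d $$ (i, l)"
    using sum_diag[OF i] by (simp add: sum_distrib_right[symmetric])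
  finally show "(block_row n n d (\<lambda>p. P p * B) * block_col n d n G) $$ (i, l) = G d $$ (i, l)" .
qed (use prod_factors_carrier[of d] in auto)

lemma iteration_mat_eq_block_col_mult_block_row:
  "iteration_mat n d (\<lambda>p. P p * B) = block_col n d n G * block_row n n d (\<lambda>p. P p * B)"
proof -
  let ?A = "1\<^sub>m (d * n) - blockL n d (\<lambda>p. P p * B)"
    and ?Z = "block_col n d n G" and ?Y = "block_row n n d (\<lambda>p. P p * B)"
  define S where "S = the (mat_inverse ?A)"
  have A: "?A \<in> carrier_mat (d * n) (d * n)" by (intro minus_carrier_mat) simp
  note inverse = the_mat_inverse[OF A, unfolded det_one_minus_blockL S_def[symmetric], simplified]
  have "iteration_mat n d (\<lambda>p. P p * B) = S * (?A * ?Z * ?Y)"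
    unfolding iteration_mat_def S_def blockU_eq_block_col_mult_block_row one_minus_blockL_mult_block_col ..
  also have "?A * ?Z * ?Y = ?A * (?Z * ?Y)" using A by (intro assoc_mult_mat) auto
  also have "S * (?A * (?Z * ?Y)) = S * ?A * (?Z * ?Y)" using A inverse by (intro assoc_mult_mat[symmetric]) auto
  also have "\<dots> = ?Z * ?Y" using inverse by simp
  finally show ?thesis .
qed

end

theorem proposition5p1:
  fixes n d :: nat and BJ :: "real mat" and P :: "nat \<Rightarrow> real mat"
  assumes "1 \<le> d" and "d \<le> n"
    and "BJ \<in> carrier_mat n n"
    and "\<forall>p<d. P p \<in> carrier_mat n n"
    and "\<forall>p<d. \<forall>i<n. \<forall>j<n. P p $$ (i,j) \<in> {0,1}"
    and "\<forall>p<d. P p \<noteq> 0\<^sub>m n n"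
    and "\<forall>i<n. \<forall>j<n. (\<Sum>p<d. P p $$ (i,j)) = (1\<^sub>m n :: real mat) $$ (i,j)"
    and "\<forall>p<d. P p * BJ \<noteq> 0\<^sub>m n n"
  shows "nonzero_eigenvalues (prod_factors n P BJ d)
       = nonzero_eigenvalues (iteration_mat n d (\<lambda>p. P p * BJ))"
  \<comment> \<open>The nonvanishing hypotheses (and \<open>1 \<le> d \<le> n\<close>) only make \<open>(P p * BJ)\<^sub>p\<close> a genuine
    splitting; the identity \<open>T = Z Y\<close>, \<open>\<P> = Y Z\<close> holds without them.\<close>
proof -
  interpret identity_partition_splitting n d P BJ
    using assms by unfold_locales auto
  show ?thesis
    unfolding iteration_mat_eq_block_col_mult_block_row block_row_mult_block_col[symmetric]
    by (rule nonzero_eigenvalues_mult_swap) auto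
qed

end
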